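(* Let $\lambda$ be an irreducible representation of $S_n$ with $d_\lambda > e^{-\sqrt{n}\log n}\sqrt{n!}$. Then the width and the height of the Young diagram of $\lambda$ are both less than $4\sqrt{n}\log n$.
   Context: Irreps of $S_n$ are indexed by Young diagrams (partitions $\lambda_1\ge\lambda_2\ge\cdots$ of $n$); the width is the length of the first row $\lambda_1$ and the height is the number of rows. $d_\lambda$ is the dimension of the irrep; $\log$ is the natural logarithm. *)

theory Defs
  imports Complex_Main
begin

definition is_partition :: "nat \<Rightarrow> nat list \<Rightarrow> bool" where
  "is_partition n lam \<longleftrightarrow> sorted (rev lam) \<and> (\<forall>x\<in>set lam. 0 < x) \<and> sum_list lam = n"

text \<open>Cells (row i, column j), 0-indexed.\<close>
definition young_cells :: "nat list \<Rightarrow> (nat \<times> nat) set" where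
  "young_cells lam = {(i, j). i < length lam \<and> j < lam ! i}"

definition young_width :: "nat list \<Rightarrow> nat" where
  "young_width lam = (if lam = [] then 0 else hd lam)"

definition young_height :: "nat list \<Rightarrow> nat" where
  "young_height lam = length lam"

definition standard_tableaux :: "nat list \<Rightarrow> (nat \<times> nat \<Rightarrow> nat) set" where
  "standard_tableaux lam = {T.
     bij_betw T (young_cells lam) {1..sum_list lam} \<and>
     (\<forall>c. c \<notin> young_cells lam \<longrightarrow> T c = 0) \<and>
     (\<forall>i j. (i, Suc j) \<in> young_cells lam \<longrightarrow> T (i, j) < T (i, Suc j)) \<and>
     (\<forall>i j. (Suc i, j) \<in> young_cells lam \<longrightarrow> T (i, j) < T (Suc i, j))}"

text \<open>Dimension of the irreducible representation of S_n indexed by lam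
  = number of standard Young tableaux of shape lam.\<close>
definition irrep_dim :: "nat list \<Rightarrow> nat" where
  "irrep_dim lam = card (standard_tableaux lam)"

end

(*
  Let f(S) be the number of standard Young tableaux of a diagram S with n cells.  The cell
  carrying the largest label is a removable corner, which gives the branching rule
  f(S) = sum of f(S - c) over removable c.  Together with the up-down identity
  sum of f(S + c) over addable c = (n + 1) f(S) this yields the sum of f(S)^2 over all
  diagrams of size n equal to n!, so f(S)^2 <= n!.

  A tableau is determined by the labels in its lower rows, since the first row, of length w,
  lists the remaining labels increasingly.  Hence f(S) <= C(n, w) f(S') with S' the diagram without
  its first row, and f(S)^2 <= n! C(n, w) / w!.  If w >= 4 sqrt n log n, then
  w! >= (w/e)^w makes C(n, w) / w! <= n^w / w!^2 smaller than exp (-2 sqrt n log n),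
  contradicting the lower bound on f(S).  Transposition preserves f and exchanges width and
  height.
*)

theory Submission
  imports Defs "HOL-Analysis.Harmonic_Numbers"
begin

definition diagram :: "(nat \<times> nat) set \<Rightarrow> bool" where
  "diagram S \<longleftrightarrow> finite S \<and> (\<forall>i j. (Suc i, j) \<in> S \<longrightarrow> (i, j) \<in> S) \<and>
     (\<forall>i j. (i, Suc j) \<in> S \<longrightarrow> (i, j) \<in> S)"

definition row_len :: "(nat \<times> nat) set \<Rightarrow> nat \<Rightarrow> nat" where
  "row_len S i = card {j. (i, j) \<in> S}"

definition removable_cells :: "(nat \<times> nat) set \<Rightarrow> (nat \<times> nat) set" where
  "removable_cells S = {c \<in> S. diagram (S - {c})}"

definition addable_cells :: "(nat \<times> nat) set \<Rightarrow> (nat \<times> nat) set" where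
  "addable_cells S = {c. c \<notin> S \<and> diagram (insert c S)}"

lemma diagramI:
  assumes "finite S" "\<And>i j. (Suc i, j) \<in> S \<Longrightarrow> (i, j) \<in> S" "\<And>i j. (i, Suc j) \<in> S \<Longrightarrow> (i, j) \<in> S"
  shows "diagram S"
  using assms unfolding diagram_def by blast

lemma diagram_finite: "diagram S \<Longrightarrow> finite S"
  by (simp add: diagram_def)

lemma diagram_Suc_row: "diagram S \<Longrightarrow> (Suc i, j) \<in> S \<Longrightarrow> (i, j) \<in> S"
  unfolding diagram_def by blast

lemma diagram_Suc_col: "diagram S \<Longrightarrow> (i, Suc j) \<in> S \<Longrightarrow> (i, j) \<in> S"
  unfolding diagram_def by blast

lemma diagram_Un: "diagram A \<Longrightarrow> diagram B \<Longrightarrow> diagram (A \<union> B)"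
  unfolding diagram_def by blast

lemma diagram_Int: "diagram A \<Longrightarrow> diagram B \<Longrightarrow> diagram (A \<inter> B)"
  unfolding diagram_def by blast

lemma diagram_swap_image:
  assumes "diagram S"
  shows "diagram (prod.swap ` S)"
proof (rule diagramI)
  show "finite (prod.swap ` S)" using diagram_finite[OF assms] by simp
qed (auto dest: diagram_Suc_row[OF assms] diagram_Suc_col[OF assms])

text \<open>\<^term>\<open>apfst Suc -` S\<close> is \<^term>\<open>S\<close> with its first row deleted and the other rows
  moved up.\<close>

lemma diagram_lower_rows:
  assumes "diagram S"
  shows "diagram (apfst Suc -` S)"
proof (rule diagramI)
  show "finite (apfst Suc -` S)" using diagram_finite[OF assms] by (rule finite_vimageI) simp
qed (auto dest: diagram_Suc_row[OF assms] diagram_Suc_col[OF assms])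

lemma down_closed_nat_set:
  fixes A :: "nat set"
  assumes "finite A" and "\<And>j. Suc j \<in> A \<Longrightarrow> j \<in> A"
  shows "A = {..<card A}"
proof -
  have "k < card A" if "k \<in> A" for k
  proof -
    have "{..k} \<subseteq> A"
    proof
      fix j assume "j \<in> {..k}"
      then have "j \<le> k" by simp
      then show "j \<in> A"
      proof (induction rule: inc_induct)
        case base
        show ?case by fact
      next
        case (step n)
        then show ?case using assms(2) by blast
      qed
    qed
    from card_mono[OF assms(1) this] show ?thesis by simp
  qed
  then have "A \<subseteq> {..<card A}" by blast
  then show ?thesis by (rule card_subset_eq[OF finite_lessThan]) simp
qed

lemma finite_row: "finite S \<Longrightarrow> finite {j. (i, j) \<in> S}"
  using finite_vimageI[of S "Pair i"] by (simp add: vimage_def inj_on_def)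

lemma mem_diagram_iff: "diagram S \<Longrightarrow> (i, j) \<in> S \<longleftrightarrow> j < row_len S i"
  using down_closed_nat_set[of "{j. (i, j) \<in> S}"]
  by (auto simp: row_len_def finite_row diagram_finite dest: diagram_Suc_col)

lemma row_len_Suc_le:
  assumes "diagram S"
  shows "row_len S (Suc i) \<le> row_len S i"
proof (cases "row_len S (Suc i)")
  case (Suc r)
  then have "(Suc i, r) \<in> S" using mem_diagram_iff[OF assms] by simp
  then have "(i, r) \<in> S" by (rule diagram_Suc_row[OF assms])
  then show ?thesis using Suc mem_diagram_iff[OF assms] by simp
qed simp

lemma diagram_rectangle_subset:
  assumes "diagram S" "(a, b) \<in> S"
  shows "{..a} \<times> {..b} \<subseteq> S"
proof clarify
  fix i j assume "i \<le> a" "j \<le> b"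
  from \<open>i \<le> a\<close> have "(i, b) \<in> S"
    by (induction rule: inc_induct) (auto simp: assms(2) dest: diagram_Suc_row[OF assms(1)])
  with \<open>j \<le> b\<close> show "(i, j) \<in> S"
    by (induction rule: inc_induct) (auto dest: diagram_Suc_col[OF assms(1)])
qed

lemma diagram_cell_bound:
  assumes "diagram S" "(a, b) \<in> S"
  shows "a < card S" "b < card S"
proof -
  have "card ({..a} \<times> {..b}) \<le> card S"
    using card_mono[OF diagram_finite diagram_rectangle_subset] assms by blast
  then have "Suc a * Suc b \<le> card S" by (simp add: card_cartesian_product)
  moreover have "Suc a \<le> Suc a * Suc b" "Suc b \<le> Suc a * Suc b" by simp_all
  ultimately show "a < card S" "b < card S" by linarith+
qed

lemma removable_cells_iff:
  assumes "diagram S"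
  shows "(a, b) \<in> removable_cells S \<longleftrightarrow> (a, b) \<in> S \<and> (a, Suc b) \<notin> S \<and> (Suc a, b) \<notin> S"
proof
  assume "(a, b) \<in> removable_cells S"
  then have "(a, b) \<in> S" and rest: "diagram (S - {(a, b)})"
    by (auto simp: removable_cells_def)
  with diagram_Suc_col[OF rest, of a b] diagram_Suc_row[OF rest, of a b]
  show "(a, b) \<in> S \<and> (a, Suc b) \<notin> S \<and> (Suc a, b) \<notin> S" by auto
next
  assume corner: "(a, b) \<in> S \<and> (a, Suc b) \<notin> S \<and> (Suc a, b) \<notin> S"
  then have "diagram (S - {(a, b)})"
    by (auto intro!: diagramI simp: diagram_finite[OF assms]
        dest: diagram_Suc_row[OF assms] diagram_Suc_col[OF assms])
  with corner show "(a, b) \<in> removable_cells S" by (simp add: removable_cells_def)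
qed

lemma addable_cells_iff:
  assumes "diagram S"
  shows "(a, b) \<in> addable_cells S \<longleftrightarrow>
    (a, b) \<notin> S \<and> (\<forall>b'. b = Suc b' \<longrightarrow> (a, b') \<in> S) \<and> (\<forall>a'. a = Suc a' \<longrightarrow> (a', b) \<in> S)"
proof
  assume "(a, b) \<in> addable_cells S"
  then have "(a, b) \<notin> S" and ext: "diagram (insert (a, b) S)"
    by (auto simp: addable_cells_def)
  moreover have "(a, b') \<in> S" if "b = Suc b'" for b'
    using diagram_Suc_col[OF ext, of a b'] that by auto
  moreover have "(a', b) \<in> S" if "a = Suc a'" for a'
    using diagram_Suc_row[OF ext, of a' b] that by auto
  ultimately
  show "(a, b) \<notin> S \<and> (\<forall>b'. b = Suc b' \<longrightarrow> (a, b') \<in> S) \<and> (\<forall>a'. a = Suc a' \<longrightarrow> (a', b) \<in> S)"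
    by blast
next
  assume corner: "(a, b) \<notin> S \<and> (\<forall>b'. b = Suc b' \<longrightarrow> (a, b') \<in> S) \<and> (\<forall>a'. a = Suc a' \<longrightarrow> (a', b) \<in> S)"
  then have "diagram (insert (a, b) S)"
    by (auto intro!: diagramI simp: diagram_finite[OF assms]
        dest: diagram_Suc_row[OF assms] diagram_Suc_col[OF assms])
  with corner show "(a, b) \<in> addable_cells S" by (simp add: addable_cells_def)
qed

lemma removable_cells_eq:
  assumes "diagram S"
  shows "removable_cells S = (\<lambda>i. (i, row_len S i - 1)) ` {i. row_len S (Suc i) < row_len S i}"
proof (rule set_eqI)
  fix c :: "nat \<times> nat"
  obtain a b where c: "c = (a, b)" by fastforce
  have "c \<in> removable_cells S \<longleftrightarrow> b = row_len S a - 1 \<and> row_len S (Suc a) < row_len S a"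
    using row_len_Suc_le[OF assms, of a]
    unfolding c removable_cells_iff[OF assms] mem_diagram_iff[OF assms] by auto
  then show "c \<in> removable_cells S \<longleftrightarrow>
      c \<in> (\<lambda>i. (i, row_len S i - 1)) ` {i. row_len S (Suc i) < row_len S i}"
    unfolding c by auto
qed

lemma addable_cells_eq:
  assumes "diagram S"
  shows "addable_cells S =
    (\<lambda>i. (i, row_len S i)) ` insert 0 (Suc ` {i. row_len S (Suc i) < row_len S i})"
proof (rule set_eqI)
  fix c :: "nat \<times> nat"
  obtain a b where c: "c = (a, b)" by fastforce
  have "c \<in> addable_cells S \<longleftrightarrow> b = row_len S a \<and> (\<forall>a'. a = Suc a' \<longrightarrow> row_len S a < row_len S a')"
    unfolding c addable_cells_iff[OF assms] mem_diagram_iff[OF assms]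
    by (cases b) (auto simp: less_Suc_eq)
  then show "c \<in> addable_cells S \<longleftrightarrow>
    c \<in> (\<lambda>i. (i, row_len S i)) ` insert 0 (Suc ` {i. row_len S (Suc i) < row_len S i})"
    unfolding c by (cases a) auto
qed

lemma finite_removable_cells: "diagram S \<Longrightarrow> finite (removable_cells S)"
  using diagram_finite by (auto simp: removable_cells_def)

lemma finite_descent_rows: "diagram S \<Longrightarrow> finite {i. row_len S (Suc i) < row_len S i}"
proof -
  assume S: "diagram S"
  have "{i. row_len S (Suc i) < row_len S i} \<subseteq> fst ` S"
    using mem_diagram_iff[OF S] by force
  with diagram_finite[OF S] show ?thesis by (blast intro: finite_subset)
qed

lemma finite_addable_cells: "diagram S \<Longrightarrow> finite (addable_cells S)"
  by (simp add: addable_cells_eq finite_descent_rows)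

lemma card_addable_cells:
  assumes "diagram S"
  shows "card (addable_cells S) = Suc (card (removable_cells S))"
proof -
  let ?I = "{i. row_len S (Suc i) < row_len S i}"
  have "card (removable_cells S) = card ?I"
    unfolding removable_cells_eq[OF assms] by (rule card_image) (simp add: inj_on_def)
  moreover have "card (addable_cells S) = card (insert 0 (Suc ` ?I))"
    unfolding addable_cells_eq[OF assms] by (rule card_image) (simp add: inj_on_def)
  moreover have "card (insert 0 (Suc ` ?I)) = Suc (card ?I)"
    using finite_descent_rows[OF assms] by (simp add: card_image)
  ultimately show ?thesis by simp
qed

text \<open>Labels come from an arbitrary set \<^term>\<open>B\<close>, so that deleting the largest label of a tableau
  leaves a tableau of the same kind.\<close>

definition tableaux :: "(nat \<times> nat) set \<Rightarrow> nat set \<Rightarrow> (nat \<times> nat \<Rightarrow> nat) set" where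
  "tableaux S B = {T. bij_betw T S B \<and> (\<forall>c. c \<notin> S \<longrightarrow> T c = 0) \<and>
     (\<forall>i j. (i, Suc j) \<in> S \<longrightarrow> T (i, j) < T (i, Suc j)) \<and>
     (\<forall>i j. (Suc i, j) \<in> S \<longrightarrow> T (i, j) < T (Suc i, j))}"

definition syt_count :: "(nat \<times> nat) set \<Rightarrow> nat" where
  "syt_count S = card (tableaux S {1..card S})"

lemma tableau_bij: "T \<in> tableaux S B \<Longrightarrow> bij_betw T S B"
  by (simp add: tableaux_def)

lemma tableau_outside: "T \<in> tableaux S B \<Longrightarrow> c \<notin> S \<Longrightarrow> T c = 0"
  unfolding tableaux_def by blast

lemma tableau_row_less: "T \<in> tableaux S B \<Longrightarrow> (i, Suc j) \<in> S \<Longrightarrow> T (i, j) < T (i, Suc j)"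
  by (simp add: tableaux_def)

lemma tableau_col_less: "T \<in> tableaux S B \<Longrightarrow> (Suc i, j) \<in> S \<Longrightarrow> T (i, j) < T (Suc i, j)"
  by (simp add: tableaux_def)

lemma finite_tableaux:
  assumes "finite S" "finite B"
  shows "finite (tableaux S B)"
proof -
  have "inj_on (\<lambda>T. restrict T S) (tableaux S B)"
    by (rule inj_onI) (metis ext restrict_apply' tableau_outside)
  moreover have "(\<lambda>T. restrict T S) ` tableaux S B \<subseteq> S \<rightarrow>\<^sub>E B"
    by (auto dest!: tableau_bij simp: bij_betw_def)
  then have "finite ((\<lambda>T. restrict T S) ` tableaux S B)"
    using assms by (blast intro: finite_subset finite_PiE)
  ultimately show ?thesis by (rule finite_imageD[rotated])
qed

lemma tableau_delete:
  assumes T: "T \<in> tableaux S B" and "c \<in> S"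
  shows "T(c := 0) \<in> tableaux (S - {c}) (B - {T c})"
proof -
  have "bij_betw T (S - {c}) (B - {T c})"
    using bij_betw_DiffI[OF tableau_bij[OF T], of "{c}" "{T c}"] \<open>c \<in> S\<close>
    by (simp add: bij_betw_apply[OF tableau_bij[OF T]])
  then have "bij_betw (T(c := 0)) (S - {c}) (B - {T c})"
    by (rule bij_betw_cong[THEN iffD1, rotated]) simp
  with T show ?thesis
    by (auto simp: tableaux_def dest: tableau_row_less[OF T] tableau_col_less[OF T])
qed

lemma tableau_insert_max:
  assumes T: "T \<in> tableaux (S - {c}) (B - {M})" and S: "diagram S"
    and c: "c \<in> removable_cells S" and "M \<in> B" and le_M: "\<forall>x\<in>B. x \<le> M"
  shows "T(c := M) \<in> tableaux S B"
proof -
  obtain a b where ab: "c = (a, b)" by fastforce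
  have c_corner: "c \<in> S" "(a, Suc b) \<notin> S" "(Suc a, b) \<notin> S"
    using c removable_cells_iff[OF S] ab by auto
  have "bij_betw (T(c := M)) (S - {c}) (B - {M})"
    using tableau_bij[OF T] by (rule bij_betw_cong[THEN iffD1, rotated]) simp
  then have "bij_betw (T(c := M)) (S - {c} \<union> {c}) (B - {M} \<union> {M})"
    using notIn_Un_bij_betw[of c "S - {c}" "T(c := M)" "B - {M}"] by simp
  moreover have "S - {c} \<union> {c} = S" "B - {M} \<union> {M} = B" using c_corner \<open>M \<in> B\<close> by auto
  ultimately have bij: "bij_betw (T(c := M)) S B" by simp
  have below_M: "T x < M" if "x \<in> S - {c}" for x
    using bij_betw_apply[OF tableau_bij[OF T] that] le_M by fastforce
  have "T (i, j) < (T(c := M)) (i, Suc j)" if "(i, Suc j) \<in> S" for i j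
    using that c_corner ab below_M[of "(i, j)"] tableau_row_less[OF T, of i j]
    by (cases "(i, Suc j) = c") (auto dest: diagram_Suc_col[OF S])
  moreover have "T (i, j) < (T(c := M)) (Suc i, j)" if "(Suc i, j) \<in> S" for i j
    using that c_corner ab below_M[of "(i, j)"] tableau_col_less[OF T, of i j]
    by (cases "(Suc i, j) = c") (auto dest: diagram_Suc_row[OF S])
  moreover have "(i, j) \<noteq> c" if "(i, Suc j) \<in> S \<or> (Suc i, j) \<in> S" for i j
    using that c_corner ab by auto
  ultimately show ?thesis
    using bij tableau_outside[OF T] c_corner by (auto simp: tableaux_def)
qed

lemma tableau_max_label_removable:
  assumes S: "diagram S" and T: "T \<in> tableaux S B" and "finite B"
    and "c \<in> S" and "T c = Max B"
  shows "c \<in> removable_cells S"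
proof -
  obtain a b where ab: "c = (a, b)" by fastforce
  have "\<not> T c < T d" if "d \<in> S" for d
    using Max_ge[OF \<open>finite B\<close> bij_betw_apply[OF tableau_bij[OF T] that]] \<open>T c = Max B\<close>
    by simp
  then show ?thesis
    using \<open>c \<in> S\<close> tableau_row_less[OF T, of a b] tableau_col_less[OF T, of a b]
    by (auto simp: ab removable_cells_iff[OF S])
qed

lemma card_tableaux_max_at:
  assumes S: "diagram S" and c: "c \<in> removable_cells S" and "finite B" "B \<noteq> {}"
  shows "card {T \<in> tableaux S B. T c = Max B} = card (tableaux (S - {c}) (B - {Max B}))"
proof (rule bij_betw_same_card[of "\<lambda>T. T(c := 0)"],
    rule bij_betw_byWitness[where f' = "\<lambda>T. T(c := Max B)"])
  have "c \<in> S" using c by (simp add: removable_cells_def)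
  have "Max B \<in> B" "\<forall>x\<in>B. x \<le> Max B" using \<open>finite B\<close> \<open>B \<noteq> {}\<close> by simp_all
  show "\<forall>T\<in>{T \<in> tableaux S B. T c = Max B}. T(c := 0, c := Max B) = T" by auto
  show "\<forall>T\<in>tableaux (S - {c}) (B - {Max B}). T(c := Max B, c := 0) = T"
    using tableau_outside by fastforce
  show "(\<lambda>T. T(c := 0)) ` {T \<in> tableaux S B. T c = Max B} \<subseteq> tableaux (S - {c}) (B - {Max B})"
  proof clarify
    fix T assume "T \<in> tableaux S B" "T c = Max B"
    with tableau_delete[OF this(1) \<open>c \<in> S\<close>] show "T(c := 0) \<in> tableaux (S - {c}) (B - {Max B})"
      by simp
  qed
  show "(\<lambda>T. T(c := Max B)) ` tableaux (S - {c}) (B - {Max B}) \<subseteq> {T \<in> tableaux S B. T c = Max B}"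
    using tableau_insert_max[OF _ S c \<open>Max B \<in> B\<close> \<open>\<forall>x\<in>B. x \<le> Max B\<close>] by auto
qed

lemma card_tableaux_by_max_cell:
  assumes S: "diagram S" "S \<noteq> {}" and B: "finite B" "card B = card S"
  shows "card (tableaux S B) = (\<Sum>c\<in>removable_cells S. card (tableaux (S - {c}) (B - {Max B})))"
proof -
  define A where "A c = {T \<in> tableaux S B. T c = Max B}" for c
  have "B \<noteq> {}" using B S diagram_finite by auto
  have "tableaux S B = (\<Union>c\<in>removable_cells S. A c)"
  proof (intro equalityI subsetI)
    fix T assume T: "T \<in> tableaux S B"
    have "Max B \<in> T ` S"
      using Max_in[OF B(1) \<open>B \<noteq> {}\<close>] bij_betw_imp_surj_on[OF tableau_bij[OF T]] by simp
    then obtain c where "Max B = T c" "c \<in> S" by (rule imageE)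
    moreover from this have "c \<in> removable_cells S"
      using tableau_max_label_removable[OF S(1) T B(1)] by simp
    ultimately show "T \<in> (\<Union>c\<in>removable_cells S. A c)" using T by (auto simp: A_def)
  qed (auto simp: A_def)
  moreover have "A c \<inter> A d = {}" if "c \<in> removable_cells S" "d \<in> removable_cells S" "c \<noteq> d" for c d
  proof (rule equals0I)
    fix T assume "T \<in> A c \<inter> A d"
    then have T: "T \<in> tableaux S B" and "T c = T d" by (auto simp: A_def)
    moreover have "c \<in> S" "d \<in> S" using that by (simp_all add: removable_cells_def)
    ultimately have "c = d" using inj_onD[OF bij_betw_imp_inj_on[OF tableau_bij[OF T]]] by blast
    with \<open>c \<noteq> d\<close> show False ..
  qed
  moreover have "finite (A c)" for c
    using finite_tableaux[OF diagram_finite[OF S(1)] B(1)] by (simp add: A_def)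
  ultimately have "card (tableaux S B) = (\<Sum>c\<in>removable_cells S. card (A c))"
    by (simp add: card_UN_disjoint finite_removable_cells[OF S(1)])
  also have "\<dots> = (\<Sum>c\<in>removable_cells S. card (tableaux (S - {c}) (B - {Max B})))"
    unfolding A_def by (rule sum.cong[OF refl card_tableaux_max_at[OF S(1) _ B(1) \<open>B \<noteq> {}\<close>]])
  finally show ?thesis .
qed

lemma card_tableaux:
  assumes "diagram S" "finite B" "card B = card S"
  shows "card (tableaux S B) = syt_count S"
  using assms
proof (induction "card S" arbitrary: S B)
  case 0
  then show ?case by (simp add: syt_count_def diagram_finite)
next
  case (Suc m)
  have "S \<noteq> {}" using Suc.hyps(2) by auto
  have "card (tableaux S B') = (\<Sum>c\<in>removable_cells S. syt_count (S - {c}))"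
    if B': "finite B'" "card B' = card S" for B'
  proof -
    have "card (tableaux (S - {c}) (B' - {Max B'})) = syt_count (S - {c})"
      if "c \<in> removable_cells S" for c
    proof (rule Suc.hyps(1))
      have "c \<in> S" "diagram (S - {c})" using that by (simp_all add: removable_cells_def)
      moreover have "B' \<noteq> {}" using B' Suc.hyps(2) by auto
      ultimately show "m = card (S - {c})" "diagram (S - {c})" "finite (B' - {Max B'})"
          "card (B' - {Max B'}) = card (S - {c})"
        using B' Suc.hyps(2) diagram_finite[OF Suc.prems(1)] by simp_all
    qed
    then show ?thesis
      using card_tableaux_by_max_cell[OF Suc.prems(1) \<open>S \<noteq> {}\<close> B'] by simp
  qed
  from this[of B] this[of "{1..card S}"] Suc.prems show ?case
    by (simp add: syt_count_def)
qed

lemma syt_count_by_removable_cells: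
  assumes "diagram S" "S \<noteq> {}"
  shows "syt_count S = (\<Sum>c\<in>removable_cells S. syt_count (S - {c}))"
proof -
  have "card S > 0" using assms diagram_finite by (simp add: card_gt_0_iff)
  have "card (tableaux (S - {c}) ({1..card S} - {Max {1..card S}})) = syt_count (S - {c})"
    if "c \<in> removable_cells S" for c
    using that \<open>card S > 0\<close> diagram_finite[OF assms(1)]
    by (intro card_tableaux) (auto simp: removable_cells_def)
  then show ?thesis
    unfolding syt_count_def[of S] using card_tableaux_by_max_cell[OF assms] by simp
qed

lemma syt_count_empty: "syt_count {} = 1"
proof -
  have "tableaux {} {} = {\<lambda>_. 0}"
    by (auto simp: tableaux_def bij_betw_def)
  then show ?thesis by (simp add: syt_count_def)
qed

lemma addable_removable_swap:
  assumes S: "diagram S"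
  shows "c \<in> addable_cells S \<and> e \<in> removable_cells (insert c S) \<and> e \<noteq> c \<longleftrightarrow>
    e \<in> removable_cells S \<and> c \<in> addable_cells (S - {e}) \<and> c \<noteq> e"
proof
  assume h: "c \<in> addable_cells S \<and> e \<in> removable_cells (insert c S) \<and> e \<noteq> c"
  then have "c \<notin> S" "e \<in> S" and ext: "diagram (insert c S - {e})"
    by (auto simp: addable_cells_def removable_cells_def)
  moreover have "S - {e} = (insert c S - {e}) \<inter> S" by auto
  with diagram_Int[OF ext S] have "diagram (S - {e})" by simp
  moreover have "insert c (S - {e}) = insert c S - {e}" using h by auto
  ultimately show "e \<in> removable_cells S \<and> c \<in> addable_cells (S - {e}) \<and> c \<noteq> e"
    using ext h by (auto simp: addable_cells_def removable_cells_def)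
next
  assume h: "e \<in> removable_cells S \<and> c \<in> addable_cells (S - {e}) \<and> c \<noteq> e"
  then have "e \<in> S" "c \<notin> S" and ext: "diagram (insert c (S - {e}))"
    by (auto simp: addable_cells_def removable_cells_def)
  moreover have "insert c S = insert c (S - {e}) \<union> S" by auto
  with diagram_Un[OF ext S] have "diagram (insert c S)" by simp
  moreover have "insert c S - {e} = insert c (S - {e})" using h by auto
  ultimately show "c \<in> addable_cells S \<and> e \<in> removable_cells (insert c S) \<and> e \<noteq> c"
    using ext h by (auto simp: addable_cells_def removable_cells_def)
qed

lemma sum_addable_removable_exchange:
  assumes S: "diagram S"
  shows "(\<Sum>c\<in>addable_cells S. \<Sum>e\<in>removable_cells (insert c S) - {c}. f (insert c S - {e})) =
    (\<Sum>e\<in>removable_cells S. \<Sum>c\<in>addable_cells (S - {e}) - {e}. f (insert c (S - {e})))"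
proof -
  let ?R = "\<lambda>c e. e \<in> removable_cells (insert c S) \<and> e \<noteq> c"
  have "(\<Sum>c\<in>addable_cells S. \<Sum>e\<in>removable_cells (insert c S) - {c}. f (insert c S - {e})) =
    (\<Sum>c\<in>addable_cells S. \<Sum>e\<in>{e. e \<in> removable_cells S \<and> ?R c e}. f (insert c (S - {e})))"
    using addable_removable_swap[OF S]
    by (intro sum.cong refl) (auto intro!: sum.cong arg_cong[where f = f])
  also have "\<dots> =
      (\<Sum>e\<in>removable_cells S. \<Sum>c\<in>{c. c \<in> addable_cells S \<and> ?R c e}. f (insert c (S - {e})))"
    by (rule sum.swap_restrict[OF finite_addable_cells[OF S] finite_removable_cells[OF S]])
  also have "\<dots> = (\<Sum>e\<in>removable_cells S. \<Sum>c\<in>addable_cells (S - {e}) - {e}. f (insert c (S - {e})))"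
    using addable_removable_swap[OF S] by (intro sum.cong refl) auto
  finally show ?thesis .
qed

lemma syt_count_insert_addable:
  assumes S: "diagram S" and c: "c \<in> addable_cells S"
  shows "syt_count (insert c S) =
    syt_count S + (\<Sum>e\<in>removable_cells (insert c S) - {c}. syt_count (insert c S - {e}))"
proof -
  have ext: "diagram (insert c S)" and "insert c S - {c} = S"
    using c by (auto simp: addable_cells_def)
  then have "c \<in> removable_cells (insert c S)" using S by (simp add: removable_cells_def)
  with syt_count_by_removable_cells[OF ext] \<open>insert c S - {c} = S\<close> show ?thesis
    by (simp add: sum.remove[OF finite_removable_cells[OF ext]])
qed

lemma sum_addable_cells_delete:
  assumes S: "diagram S" and e: "e \<in> removable_cells S"
  shows "(\<Sum>c\<in>addable_cells (S - {e}). f (insert c (S - {e}))) =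
    f S + (\<Sum>c\<in>addable_cells (S - {e}) - {e}. f (insert c (S - {e})))"
proof -
  have "e \<in> S" and rest: "diagram (S - {e})" using e by (auto simp: removable_cells_def)
  then have "insert e (S - {e}) = S" by auto
  with S have "e \<in> addable_cells (S - {e})" by (simp add: addable_cells_def)
  from sum.remove[OF finite_addable_cells[OF rest] this, of "\<lambda>c. f (insert c (S - {e}))"]
  show ?thesis by (simp only: \<open>insert e (S - {e}) = S\<close>)
qed

text \<open>The relation \<open>DU - UD = I\<close> of Young's lattice, evaluated on \<^term>\<open>syt_count\<close>.\<close>

lemma sum_syt_count_addable_cells:
  assumes "diagram S"
  shows "(\<Sum>c\<in>addable_cells S. syt_count (insert c S)) = Suc (card S) * syt_count S"
  using assms
proof (induction "card S" arbitrary: S rule: less_induct)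
  case less
  note S = \<open>diagram S\<close>
  let ?Y = "\<Sum>e\<in>removable_cells S. \<Sum>c\<in>addable_cells (S - {e}) - {e}. syt_count (insert c (S - {e}))"
  have "(\<Sum>c\<in>addable_cells S. syt_count (insert c S)) = card (addable_cells S) * syt_count S + ?Y"
    using syt_count_insert_addable[OF S] sum_addable_removable_exchange[OF S, of syt_count]
    by (simp add: sum.distrib)
  moreover have "?Y + card (removable_cells S) * syt_count S = card S * syt_count S"
  proof (cases "S = {}")
    case True
    then show ?thesis by (simp add: removable_cells_def)
  next
    case False
    have per_cell:
      "(\<Sum>c\<in>addable_cells (S - {e}) - {e}. syt_count (insert c (S - {e}))) + syt_count S =
        card S * syt_count (S - {e})" if e: "e \<in> removable_cells S" for e
    proof -
      have "e \<in> S" "diagram (S - {e})" using e by (auto simp: removable_cells_def)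
      moreover have "Suc (card (S - {e})) = card S"
        by (rule card_Suc_Diff1[OF diagram_finite[OF S] \<open>e \<in> S\<close>])
      ultimately show ?thesis
        using less.hyps[of "S - {e}"] sum_addable_cells_delete[OF S e, of syt_count] by simp
    qed
    have "?Y + card (removable_cells S) * syt_count S = (\<Sum>e\<in>removable_cells S.
        (\<Sum>c\<in>addable_cells (S - {e}) - {e}. syt_count (insert c (S - {e}))) + syt_count S)"
      by (simp add: sum.distrib)
    also have "\<dots> = (\<Sum>e\<in>removable_cells S. card S * syt_count (S - {e}))"
      by (rule sum.cong[OF refl per_cell])
    also have "\<dots> = card S * syt_count S"
      by (simp add: syt_count_by_removable_cells[OF S False] sum_distrib_left)
    finally show ?thesis .
  qed
  ultimately show ?case using card_addable_cells[OF S] by (simp add: algebra_simps)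
qed

definition diagrams :: "nat \<Rightarrow> (nat \<times> nat) set set" where
  "diagrams m = {S. diagram S \<and> card S = m}"

lemma finite_diagrams: "finite (diagrams m)"
proof (rule finite_subset)
  show "diagrams m \<subseteq> Pow ({..<m} \<times> {..<m})"
    using diagram_cell_bound by (fastforce simp: diagrams_def)
qed simp

lemma bij_betw_remove_cell:
  "bij_betw (\<lambda>(u, e). (u - {e}, e))
    (SIGMA u:diagrams (Suc m). removable_cells u) (SIGMA v:diagrams m. addable_cells v)"
  (is "bij_betw ?remove ?A ?B")
proof (rule bij_betw_byWitness[where f' = "\<lambda>(v, c). (insert c v, c)"])
  show "\<forall>a\<in>?A. (\<lambda>(v, c). (insert c v, c)) (?remove a) = a"
    by (auto simp: removable_cells_def)
  show "\<forall>b\<in>?B. ?remove ((\<lambda>(v, c). (insert c v, c)) b) = b"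
    by (auto simp: addable_cells_def)
  show "?remove ` ?A \<subseteq> ?B"
    by (auto simp: removable_cells_def addable_cells_def diagrams_def insert_absorb diagram_finite)
  show "(\<lambda>(v, c). (insert c v, c)) ` ?B \<subseteq> ?A"
    by (auto simp: removable_cells_def addable_cells_def diagrams_def diagram_finite)
qed

theorem sum_syt_count_squares: "(\<Sum>S\<in>diagrams m. syt_count S ^ 2) = fact m"
proof (induction m)
  case 0
  have "diagrams 0 = {{}}"
    by (auto simp: diagrams_def diagram_def)
  then show ?case by (simp add: syt_count_empty)
next
  case (Suc m)
  have "(\<Sum>u\<in>diagrams (Suc m). syt_count u ^ 2) =
      (\<Sum>u\<in>diagrams (Suc m). \<Sum>e\<in>removable_cells u. syt_count u * syt_count (u - {e}))"
  proof (rule sum.cong[OF refl])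
    fix u assume "u \<in> diagrams (Suc m)"
    then have "diagram u" "u \<noteq> {}" by (auto simp: diagrams_def)
    then show "syt_count u ^ 2 = (\<Sum>e\<in>removable_cells u. syt_count u * syt_count (u - {e}))"
      by (simp add: power2_eq_square sum_distrib_left[symmetric]
          syt_count_by_removable_cells[symmetric])
  qed
  also have "\<dots> = (\<Sum>(u, e)\<in>(SIGMA u:diagrams (Suc m). removable_cells u).
      syt_count u * syt_count (u - {e}))"
    by (rule sum.Sigma[OF finite_diagrams]) (auto simp: diagrams_def finite_removable_cells)
  also have "\<dots> = (\<Sum>(v, c)\<in>(SIGMA v:diagrams m. addable_cells v).
      syt_count (insert c v) * syt_count v)"
  proof -
    have "(\<Sum>(u, e)\<in>(SIGMA u:diagrams (Suc m). removable_cells u).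
          syt_count u * syt_count (u - {e})) =
        (\<Sum>(u, e)\<in>(SIGMA u:diagrams (Suc m). removable_cells u).
          syt_count (insert e (u - {e})) * syt_count (u - {e}))"
      by (intro sum.cong refl) (auto simp: removable_cells_def insert_absorb)
    then show ?thesis
      using sum.reindex_bij_betw[OF bij_betw_remove_cell,
          of "\<lambda>(v, c). syt_count (insert c v) * syt_count v"]
      by (simp add: case_prod_unfold)
  qed
  also have "\<dots> = (\<Sum>v\<in>diagrams m. (\<Sum>c\<in>addable_cells v. syt_count (insert c v)) * syt_count v)"
    by (subst sum.Sigma[OF finite_diagrams, symmetric])
      (auto simp: diagrams_def finite_addable_cells sum_distrib_right)
  also have "\<dots> = (\<Sum>v\<in>diagrams m. Suc m * syt_count v ^ 2)"
    by (rule sum.cong[OF refl])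
      (simp add: diagrams_def sum_syt_count_addable_cells power2_eq_square algebra_simps)
  also have "\<dots> = Suc m * fact m"
    by (simp only: sum_distrib_left[symmetric] Suc.IH)
  also have "\<dots> = fact (Suc m)"
    by simp
  finally show ?case .
qed

corollary syt_count_square_le_fact:
  assumes "diagram S"
  shows "syt_count S ^ 2 \<le> fact (card S)"
proof -
  have "S \<in> diagrams (card S)" using assms by (simp add: diagrams_def)
  from member_le_sum[OF this _ finite_diagrams, of "\<lambda>S. syt_count S ^ 2"] show ?thesis
    by (simp add: sum_syt_count_squares)
qed

lemma bij_betw_image_diff: "bij_betw f A B \<Longrightarrow> X \<subseteq> A \<Longrightarrow> f ` (A - X) = B - f ` X"
  unfolding bij_betw_def by (simp add: inj_on_image_set_diff[of f A])

lemma card_first_row: "card {c \<in> S. fst c = 0} = row_len S 0"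
proof -
  have "{c \<in> S. fst c = 0} = Pair 0 ` {j. (0, j) \<in> S}" by auto
  then show ?thesis by (simp add: card_image inj_on_def row_len_def)
qed

lemma apfst_Suc_image_vimage:
  fixes S :: "(nat \<times> 'a) set"
  shows "apfst Suc ` (apfst Suc -` S) = {c \<in> S. fst c \<noteq> 0}"
proof (rule set_eqI)
  fix c :: "nat \<times> 'a"
  show "c \<in> apfst Suc ` (apfst Suc -` S) \<longleftrightarrow> c \<in> {c \<in> S. fst c \<noteq> 0}"
    by (cases c; cases "fst c") (auto simp: image_iff)
qed

lemma inj_on_apfst_Suc: "inj_on (apfst Suc) A"
  by (rule inj_on_subset[of _ UNIV]) simp_all

lemma card_split_first_row:
  assumes "finite S"
  shows "card S = row_len S 0 + card (apfst Suc -` S)"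
proof -
  have "card S = card ({c \<in> S. fst c = 0} \<union> {c \<in> S. fst c \<noteq> 0})"
    by (rule arg_cong[where f = card]) blast
  also have "\<dots> = card {c \<in> S. fst c = 0} + card {c \<in> S. fst c \<noteq> 0}"
    by (rule card_Un_disjoint) (use assms in auto)
  also have "card {c \<in> S. fst c \<noteq> 0} = card (apfst Suc -` S)"
    unfolding apfst_Suc_image_vimage[symmetric] by (rule card_image[OF inj_on_apfst_Suc])
  finally show ?thesis by (simp add: card_first_row)
qed

lemma tableau_lower_rows:
  assumes T: "T \<in> tableaux S B"
  shows "T \<circ> apfst Suc \<in> tableaux (apfst Suc -` S) (B - T ` {c \<in> S. fst c = 0})"
proof -
  have "bij_betw (apfst Suc) (apfst Suc -` S) {c \<in> S. fst c \<noteq> 0}"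
    unfolding bij_betw_def apfst_Suc_image_vimage[symmetric] by (simp add: inj_on_apfst_Suc)
  moreover have "bij_betw T {c \<in> S. fst c \<noteq> 0} (B - T ` {c \<in> S. fst c = 0})"
  proof -
    have "{c \<in> S. fst c \<noteq> 0} = S - {c \<in> S. fst c = 0}" by auto
    with bij_betw_subset[OF tableau_bij[OF T], of "{c \<in> S. fst c \<noteq> 0}"]
      bij_betw_image_diff[OF tableau_bij[OF T], of "{c \<in> S. fst c = 0}"]
    show ?thesis by auto
  qed
  ultimately have "bij_betw (T \<circ> apfst Suc) (apfst Suc -` S) (B - T ` {c \<in> S. fst c = 0})"
    by (rule bij_betw_trans)
  with T show ?thesis
    by (auto simp: tableaux_def)
qed

lemma strict_increasing_eq_if_image_eq:
  fixes f g :: "nat \<Rightarrow> 'a::linorder"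
  assumes "\<forall>j. Suc j < w \<longrightarrow> f j < f (Suc j)" and "\<forall>j. Suc j < w \<longrightarrow> g j < g (Suc j)"
    and "f ` {..<w} = g ` {..<w}" and "k < w"
  shows "f k = g k"
proof -
  have "sorted_wrt (<) (map f [0..<w])" "sorted_wrt (<) (map g [0..<w])"
    using assms(1,2) by (simp_all add: sorted_wrt_iff_nth_Suc_transp)
  moreover have "set (map g [0..<w]) = set (map f [0..<w])"
    using assms(3) by (simp add: atLeast0LessThan)
  ultimately have "map g [0..<w] = map f [0..<w]" by (rule strict_sorted_equal)
  with assms(4) show ?thesis by (simp add: map_eq_conv)
qed

lemma tableau_eq_if_lower_rows_eq:
  assumes S: "diagram S" and T1: "T1 \<in> tableaux S B" and T2: "T2 \<in> tableaux S B"
    and lower: "T1 \<circ> apfst Suc = T2 \<circ> apfst Suc"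
  shows "T1 = T2"
proof
  fix c :: "nat \<times> nat"
  let ?w = "row_len S 0"
  have first_row: "{c \<in> S. fst c = 0} = Pair 0 ` {..<?w}"
    using mem_diagram_iff[OF S] by force
  have lower_eq: "T1 x = T2 x" if "fst x \<noteq> 0" for x
    using fun_cong[OF lower, of "apfst (\<lambda>i. i - 1) x"] that by (cases x) simp
  then have "T1 ` {c \<in> S. fst c \<noteq> 0} = T2 ` {c \<in> S. fst c \<noteq> 0}" by (auto simp: image_iff)
  moreover have "T ` {c \<in> S. fst c = 0} = B - T ` {c \<in> S. fst c \<noteq> 0}" if "T \<in> tableaux S B" for T
  proof -
    have "{c \<in> S. fst c = 0} = S - {c \<in> S. fst c \<noteq> 0}" by auto
    with tableau_bij[OF that] show ?thesis
      by (simp add: bij_betw_image_diff)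
  qed
  ultimately have "(\<lambda>j. T1 (0, j)) ` {..<?w} = (\<lambda>j. T2 (0, j)) ` {..<?w}"
    using T1 T2 by (simp add: first_row image_image)
  moreover have "\<forall>j. Suc j < ?w \<longrightarrow> T (0, j) < T (0, Suc j)" if "T \<in> tableaux S B" for T
    using tableau_row_less[OF that] mem_diagram_iff[OF S] by blast
  ultimately have "T1 (0, j) = T2 (0, j)" if "j < ?w" for j
    using strict_increasing_eq_if_image_eq[of ?w "\<lambda>j. T1 (0, j)" "\<lambda>j. T2 (0, j)"] T1 T2 that
    by blast
  then show "T1 c = T2 c"
    using lower_eq[of c] tableau_outside[OF T1] tableau_outside[OF T2] mem_diagram_iff[OF S]
    by (cases c) (metis fst_conv)
qed

lemma card_tableaux_le_first_row:
  assumes S: "diagram S" and B: "finite B" "card B = card S"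
  shows "card (tableaux S B) \<le> (card S choose row_len S 0) * syt_count (apfst Suc -` S)"
proof -
  let ?w = "row_len S 0" and ?L = "apfst Suc -` S"
  define Ch where "Ch = {A. A \<subseteq> B \<and> card A = ?w}"
  have "finite Ch" using B(1) by (simp add: Ch_def)
  have inj: "inj_on (\<lambda>T. T \<circ> apfst Suc) (tableaux S B)"
    using tableau_eq_if_lower_rows_eq[OF S] by (blast intro: inj_onI)
  have maps_to: "(\<lambda>T. T \<circ> apfst Suc) ` tableaux S B \<subseteq> (\<Union>A\<in>Ch. tableaux ?L (B - A))"
  proof clarify
    fix T assume T: "T \<in> tableaux S B"
    have "inj_on T {c \<in> S. fst c = 0}"
      using bij_betw_imp_inj_on[OF tableau_bij[OF T]] by (rule inj_on_subset) blast
    then have "T ` {c \<in> S. fst c = 0} \<in> Ch"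
      using bij_betw_imp_surj_on[OF tableau_bij[OF T]]
      by (auto simp: Ch_def card_image card_first_row)
    with tableau_lower_rows[OF T] show "T \<circ> apfst Suc \<in> (\<Union>A\<in>Ch. tableaux ?L (B - A))" by blast
  qed
  have "finite (\<Union>A\<in>Ch. tableaux ?L (B - A))"
    using \<open>finite Ch\<close> B(1) diagram_finite[OF diagram_lower_rows[OF S]]
    by (simp add: finite_tableaux)
  with inj maps_to have "card (tableaux S B) \<le> card (\<Union>A\<in>Ch. tableaux ?L (B - A))"
    by (rule card_inj_on_le)
  also have "\<dots> \<le> (\<Sum>A\<in>Ch. card (tableaux ?L (B - A)))"
    by (rule card_UN_le[OF \<open>finite Ch\<close>])
  also have "\<dots> = (\<Sum>A\<in>Ch. syt_count ?L)"
  proof (rule sum.cong[OF refl], rule card_tableaux[OF diagram_lower_rows[OF S]])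
    fix A assume "A \<in> Ch"
    then show "finite (B - A)" "card (B - A) = card ?L"
      using B card_split_first_row[OF diagram_finite[OF S]]
      by (auto simp: Ch_def card_Diff_subset finite_subset)
  qed
  also have "\<dots> = (card S choose ?w) * syt_count ?L"
    using n_subsets[OF B(1), of ?w] B(2) by (simp add: Ch_def)
  finally show ?thesis .
qed

lemma syt_count_square_bound:
  assumes S: "diagram S"
  shows "real (syt_count S) ^ 2 \<le>
    fact (card S) * real (card S choose row_len S 0) / fact (row_len S 0)"
proof -
  let ?n = "card S" and ?w = "row_len S 0" and ?L = "apfst Suc -` S"
  have n: "?n = ?w + card ?L" by (rule card_split_first_row[OF diagram_finite[OF S]])
  have "syt_count S \<le> (?n choose ?w) * syt_count ?L"
    using card_tableaux_le_first_row[OF S, of "{1..card S}"] by (simp add: syt_count_def)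
  then have "real (syt_count S) \<le> real (?n choose ?w) * real (syt_count ?L)"
    by (metis of_nat_le_iff of_nat_mult)
  then have "real (syt_count S) ^ 2 \<le> (real (?n choose ?w) * real (syt_count ?L)) ^ 2"
    by (rule power_mono) simp
  also have "\<dots> = real (?n choose ?w) ^ 2 * real (syt_count ?L ^ 2)"
    by (simp add: power_mult_distrib)
  also have "\<dots> \<le> real (?n choose ?w) ^ 2 * fact (?n - ?w)"
  proof (rule mult_left_mono)
    have "syt_count ?L ^ 2 \<le> fact (?n - ?w)"
      using syt_count_square_le_fact[OF diagram_lower_rows[OF S]] n by simp
    then show "real (syt_count ?L ^ 2) \<le> fact (?n - ?w)"
      by (metis of_nat_fact of_nat_le_iff)
  qed simp
  also have "\<dots> = fact ?n * real (?n choose ?w) / fact ?w"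
  proof -
    have "fact ?w * fact (?n - ?w) * (?n choose ?w) = fact ?n"
      by (rule binomial_fact_lemma) (simp add: n)
    then have "fact ?w * fact (?n - ?w) * real (?n choose ?w) = fact ?n"
      by (metis of_nat_fact of_nat_mult)
    then show ?thesis by (simp add: field_simps power2_eq_square)
  qed
  finally show ?thesis .
qed

lemma power_div_fact_le_exp:
  assumes "0 \<le> (x::real)"
  shows "x ^ n / fact n \<le> exp x"
proof -
  have "(\<lambda>k. x ^ k / fact k) sums exp x"
    using exp_converges[of x] by (simp add: divide_inverse mult.commute)
  with assms show ?thesis
    using sum_le_suminf[of "\<lambda>k. x ^ k / fact k" "{n}"] by (simp add: sums_iff)
qed

lemma choose_div_fact_le_exp_ln:
  fixes n w :: nat
  assumes "0 < n" and "0 < w"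
  shows "real (n choose w) / fact w \<le> exp (real w * ln n + 2 * real w - 2 * real w * ln w)"
proof -
  have binom: "real (n choose w) * fact w \<le> real n ^ w"
    using binomial_fact_pow[of n w] by (metis of_nat_fact of_nat_le_iff of_nat_mult of_nat_power)
  have "real w ^ w / exp w \<le> fact w"
    using power_div_fact_le_exp[of "real w" w] by (simp add: field_simps)
  have "real (n choose w) / fact w = real (n choose w) * fact w / fact w ^ 2"
    by (simp add: power2_eq_square)
  also have "\<dots> \<le> real n ^ w / fact w ^ 2"
    by (rule divide_right_mono[OF binom]) simp
  also have "\<dots> \<le> real n ^ w / (real w ^ w / exp w) ^ 2"
    by (rule divide_left_mono, rule power_mono)
      (use \<open>real w ^ w / exp w \<le> fact w\<close> \<open>0 < w\<close> in simp_all)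
  also have "\<dots> = exp (real w * ln n + 2 * real w - 2 * real w * ln w)"
  proof -
    have "real n ^ w = exp (w * ln n)" "real w ^ w = exp (w * ln w)"
      using assms exp_of_nat_mult[of w "ln n"] exp_of_nat_mult[of w "ln w"] by simp_all
    then show ?thesis
      by (simp add: power_divide exp_add exp_diff exp_of_nat_mult[symmetric] algebra_simps)
  qed
  finally show ?thesis .
qed

lemma choose_div_fact_le_exp:
  fixes n w :: nat
  assumes "3 \<le> n" and w: "4 * sqrt n * ln n \<le> w"
  shows "real (n choose w) / fact w \<le> exp (- 2 * sqrt n * ln n)"
proof -
  have "1 \<le> ln (real n)"
    using exp_le \<open>3 \<le> n\<close> by (subst ln_ge_iff) auto
  then have "4 * sqrt n * 1 \<le> 4 * sqrt n * ln n"
    by (rule mult_left_mono) simp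
  with w have w_ge: "4 * sqrt n \<le> w" by simp
  moreover have "1 \<le> sqrt (real n)" using \<open>3 \<le> n\<close> by simp
  ultimately have "0 < real w" by linarith
  then have "0 < w" by simp
  have "ln 4 + ln n / 2 = ln (4 * sqrt n)" using \<open>3 \<le> n\<close> by (simp add: ln_mult ln_sqrt)
  also have "\<dots> \<le> ln w" using w_ge \<open>0 < w\<close> \<open>3 \<le> n\<close> by (subst ln_le_cancel_iff) simp_all
  finally have "w * ln 4 + w * ln n / 2 \<le> w * ln w"
    using mult_left_mono[of _ _ "real w"] by (fastforce simp: algebra_simps)
  moreover have "4 / 3 \<le> ln (4::real)"
    using ln2_ge_two_thirds ln_realpow[of 2 2] by simp
  then have "real w * (4 / 3) \<le> real w * ln 4" by (rule mult_left_mono) simp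
  ultimately have exponent: "real w * ln n + 2 * real w - 2 * real w * ln w \<le> - 2 * sqrt n * ln n"
    using w by simp
  have "real (n choose w) / fact w \<le> exp (real w * ln n + 2 * real w - 2 * real w * ln w)"
    using choose_div_fact_le_exp_ln \<open>0 < w\<close> \<open>3 \<le> n\<close> by simp
  also have "\<dots> \<le> exp (- 2 * sqrt n * ln n)"
    using exponent by simp
  finally show ?thesis .
qed

lemma choose_div_fact_le_one:
  fixes n w :: nat
  assumes "n \<le> 1"
  shows "real (n choose w) / fact w \<le> 1"
proof -
  have "(n choose w) * fact w \<le> 1"
    using order_trans[OF binomial_fact_pow power_le_one] assms by simp
  then have "n choose w \<le> 1"
    using fact_ge_1[of w, where 'a = nat] by (metis mult_le_mono2 mult.right_neutral order_trans)
  moreover have "real (n choose w) / fact w \<le> real (n choose w)"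
    using divide_left_mono[of 1 "fact w" "real (n choose w)"] by simp
  ultimately show ?thesis by linarith
qed

lemma first_row_lt_if_syt_count_large:
  assumes S: "diagram S"
    and large: "real (syt_count S) > exp (- sqrt (card S) * ln (card S)) * sqrt (fact (card S))"
  shows "real (row_len S 0) < 4 * sqrt (card S) * ln (card S)"
proof (rule ccontr)
  let ?n = "card S" and ?w = "row_len S 0"
  assume "\<not> ?thesis"
  then have w: "4 * sqrt ?n * ln ?n \<le> ?w" by simp
  have "?w \<le> ?n" using card_split_first_row[OF diagram_finite[OF S]] by simp
  have "exp (- 2 * sqrt ?n * ln ?n) * fact ?n = (exp (- sqrt ?n * ln ?n) * sqrt (fact ?n)) ^ 2"
    by (simp add: power_mult_distrib exp_of_nat_mult[symmetric])
  also have "\<dots> < real (syt_count S) ^ 2"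
    using large by (intro power_strict_mono) simp_all
  also have "\<dots> \<le> fact ?n * real (?n choose ?w) / fact ?w"
    by (rule syt_count_square_bound[OF S])
  finally have "exp (- 2 * sqrt ?n * ln ?n) < real (?n choose ?w) / fact ?w"
    by (simp add: field_simps)
  moreover have "real (?n choose ?w) / fact ?w \<le> exp (- 2 * sqrt ?n * ln ?n)"
  proof (cases "3 \<le> ?n")
    case True
    then show ?thesis using choose_div_fact_le_exp[OF _ w] by simp
  next
    case False
    have "?n \<noteq> 2"
    proof
      assume "?n = 2"
      have "2 < 4 * 1 * (2 / 3 :: real)" by simp
      also have "\<dots> \<le> 4 * sqrt 2 * ln 2"
        using ln2_ge_two_thirds by (intro mult_mono) simp_all
      finally show False using w \<open>?w \<le> ?n\<close> \<open>?n = 2\<close> by simp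
    qed
    with False have "?n \<le> 1" by simp
    \<comment> \<open>for \<open>n = 0\<close> this is the junk value \<open>ln 0 = 0\<close>\<close>
    moreover from this have "ln (real ?n) = 0" by (cases ?n) simp_all
    ultimately show ?thesis using choose_div_fact_le_one by simp
  qed
  ultimately show False by simp
qed

lemma tableau_swap:
  assumes T: "T \<in> tableaux S B"
  shows "T \<circ> prod.swap \<in> tableaux (prod.swap ` S) B"
proof -
  have "bij_betw prod.swap (prod.swap ` S) S"
    by (simp add: bij_betw_def inj_on_def image_image)
  then have "bij_betw (T \<circ> prod.swap) (prod.swap ` S) B"
    using tableau_bij[OF T] by (rule bij_betw_trans)
  with T show ?thesis by (auto simp: tableaux_def)
qed

lemma syt_count_swap_image: "syt_count (prod.swap ` S) = syt_count S"
proof -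
  have card: "card (prod.swap ` S) = card S" by (simp add: card_image)
  have "bij_betw (\<lambda>T. T \<circ> prod.swap)
      (tableaux S {1..card S}) (tableaux (prod.swap ` S) {1..card S})"
  proof (rule bij_betw_byWitness[where f' = "\<lambda>T. T \<circ> prod.swap"])
    show "(\<lambda>T. T \<circ> prod.swap) ` tableaux (prod.swap ` S) {1..card S} \<subseteq> tableaux S {1..card S}"
      using tableau_swap[of _ "prod.swap ` S"] by (auto simp: image_image)
  qed (auto simp: o_assoc tableau_swap)
  then show ?thesis
    unfolding syt_count_def card by (rule bij_betw_same_card[symmetric])
qed

lemma young_cells_eq_Sigma: "young_cells lam = (SIGMA i:{..<length lam}. {..<lam ! i})"
  by (auto simp: young_cells_def)

lemma diagram_young_cells:
  assumes "is_partition n lam"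
  shows "diagram (young_cells lam)"
proof (rule diagramI)
  show "finite (young_cells lam)" by (simp add: young_cells_eq_Sigma)
next
  fix i j assume cell: "(Suc i, j) \<in> young_cells lam"
  have "sorted_wrt (\<ge>) lam" using assms by (simp add: is_partition_def sorted_wrt_rev)
  then have "lam ! Suc i \<le> lam ! i"
    using cell by (auto simp: young_cells_def sorted_wrt_iff_nth_less)
  with cell show "(i, j) \<in> young_cells lam" by (simp add: young_cells_def)
qed (simp add: young_cells_def)

lemma card_young_cells: "card (young_cells lam) = sum_list lam"
  by (simp add: young_cells_eq_Sigma sum_list_sum_nth atLeast0LessThan)

lemma irrep_dim_eq_syt_count: "irrep_dim lam = syt_count (young_cells lam)"
  unfolding irrep_dim_def standard_tableaux_def syt_count_def tableaux_def card_young_cells ..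

lemma row_len_young_cells: "row_len (young_cells lam) 0 = young_width lam"
  by (cases lam) (simp_all add: row_len_def young_cells_def young_width_def)

lemma row_len_swap_young_cells:
  assumes "is_partition n lam"
  shows "row_len (prod.swap ` young_cells lam) 0 = young_height lam"
proof -
  have "{i. (0, i) \<in> prod.swap ` young_cells lam} = {..<length lam}"
    using assms by (auto simp: young_cells_def is_partition_def)
  then show ?thesis by (simp add: row_len_def young_height_def)
qed

theorem lemma5:
  fixes n :: nat and lam :: "nat list"
  assumes "is_partition n lam"
    and "real (irrep_dim lam) > exp (- sqrt (real n) * ln (real n)) * sqrt (fact n)"
  shows "real (young_width lam) < 4 * sqrt (real n) * ln (real n)
       \<and> real (young_height lam) < 4 * sqrt (real n) * ln (real n)"
proof -
  let ?Y = "young_cells lam"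
  have Y: "diagram ?Y" by (rule diagram_young_cells[OF assms(1)])
  have n: "card ?Y = n" "card (prod.swap ` ?Y) = n"
    using assms(1) by (simp_all add: card_image card_young_cells is_partition_def)
  have "real (row_len ?Y 0) < 4 * sqrt (real n) * ln (real n)"
    using first_row_lt_if_syt_count_large[OF Y] assms(2) n by (simp add: irrep_dim_eq_syt_count)
  moreover have "real (row_len (prod.swap ` ?Y) 0) < 4 * sqrt (real n) * ln (real n)"
    using first_row_lt_if_syt_count_large[OF diagram_swap_image[OF Y]] assms(2) n
    by (simp add: irrep_dim_eq_syt_count syt_count_swap_image)
  ultimately show ?thesis
    by (simp add: row_len_young_cells row_len_swap_young_cells[OF assms(1)])
qed

end
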